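(* Let $d\ge 3$, let $P\subset\mathbb{R}^d$ be a finite set of terminals, and let $T$ be an optimal Steiner tree of $P$. Let $\mathbf{s_1},\mathbf{s_2}$ be two Steiner points of $T$ joined by an edge of $T$. For a vertex $\mathbf{x}$ of $T$ let $N(\mathbf{x})$ denote the set of its neighbours in $T$, and put \[L_0=\min_{\mathbf{s}\in\{\mathbf{s_1},\mathbf{s_2}\}}\ \min_{\mathbf{v}\in N(\mathbf{s})\setminus\{\mathbf{s_1},\mathbf{s_2}\}}\|\mathbf{s}-\mathbf{v}\|.\] Then $\|\mathbf{s_1}-\mathbf{s_2}\|\ge\left(\frac{\sqrt6}{2}-1\right)L_0$.
   Context: For a finite set $P\subset\mathbb{R}^d$ (the terminals), a Steiner tree of $P$ is a tree whose vertex set is $P\cup S$ for some finite $S\subset\mathbb{R}^d$ (the Steiner points), each edge having length equal to the Euclidean distance between its endpoints; its cost is the sum of its edge lengths. An optimal Steiner tree of $P$ is a Steiner tree of minimum cost. By convention, optimal Steiner trees contain no trivial Steiner points, i.e. no Steiner point of degree $2$ that merely subdivides a straight segment. *)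

theory Defs
  imports "HOL-Analysis.Analysis"
begin

definition adj :: "'a set set \<Rightarrow> 'a \<Rightarrow> 'a \<Rightarrow> bool" where
  "adj E u v \<longleftrightarrow> {u, v} \<in> E"

definition nbrs :: "'a set set \<Rightarrow> 'a \<Rightarrow> 'a set" where
  "nbrs E x = {v. {x, v} \<in> E}"

definition graph_connected :: "'a set \<Rightarrow> 'a set set \<Rightarrow> bool" where
  "graph_connected V E \<longleftrightarrow> (\<forall>u\<in>V. \<forall>v\<in>V. (adj E)\<^sup>*\<^sup>* u v)"

text \<open>A tree: finite nonempty vertex set, edges are pairs of distinct vertices,
  connected, and acyclic (every edge is a bridge, i.e. removing it disconnects).\<close>
definition is_tree :: "'a set \<Rightarrow> 'a set set \<Rightarrow> bool" where
  "is_tree V E \<longleftrightarrow> finite V \<and> V \<noteq> {} \<and>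
     (\<forall>e\<in>E. \<exists>u v. u \<noteq> v \<and> u \<in> V \<and> v \<in> V \<and> e = {u, v}) \<and>
     graph_connected V E \<and>
     (\<forall>e\<in>E. \<not> graph_connected V (E - {e}))"

definition edge_len :: "'a::metric_space set \<Rightarrow> real" where
  "edge_len e = (SOME l. \<exists>u v. e = {u, v} \<and> l = dist u v)"

definition tree_cost :: "'a::metric_space set set \<Rightarrow> real" where
  "tree_cost E = (\<Sum>e\<in>E. edge_len e)"

text \<open>A Steiner tree of the terminal set P: a tree whose vertex set contains P;
  the Steiner points are the vertices outside P.\<close>
definition steiner_tree :: "'a::euclidean_space set \<Rightarrow> 'a set \<Rightarrow> 'a set set \<Rightarrow> bool" where
  "steiner_tree P V E \<longleftrightarrow> finite P \<and> P \<subseteq> V \<and> is_tree V E"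

definition trivial_steiner_point :: "'a::euclidean_space set \<Rightarrow> 'a set \<Rightarrow> 'a set set \<Rightarrow> 'a \<Rightarrow> bool" where
  "trivial_steiner_point P V E s \<longleftrightarrow> s \<in> V - P \<and>
     (\<exists>u w. u \<noteq> w \<and> nbrs E s = {u, w} \<and> s \<in> open_segment u w)"

definition optimal_steiner_tree :: "'a::euclidean_space set \<Rightarrow> 'a set \<Rightarrow> 'a set set \<Rightarrow> bool" where
  "optimal_steiner_tree P V E \<longleftrightarrow> steiner_tree P V E \<and>
     (\<forall>V' E'. steiner_tree P V' E' \<longrightarrow> tree_cost E \<le> tree_cost E') \<and>
     (\<forall>s. \<not> trivial_steiner_point P V E s)"

end

theory Submission
  imports Defs
begin

(* An optimal Steiner tree cannot be improved by exchanging a few of its edges for new ones that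
   keep the graph connected. Moving a Steiner point shows that the unit vectors towards its
   neighbours sum to zero; splitting off a new point between two edges at a vertex shows that they
   meet at an angle of at least 120 degrees. As there are no trivial Steiner points, the adjacent
   Steiner points s1, s2 therefore have degree 3, with all angles at them equal to 120 degrees.
   Let a, b and c, d be their other neighbours. The cosines of the angles between a - s1 and
   c - s2 and between a - s1 and d - s2 sum to -1/2, so one of them, say the first, is at least
   -1/4, and the unit vectors towards a and c add up to a vector w of length at least sqrt 6 / 2.
   If |s1 - s2| < (sqrt 6 / 2 - 1) L0, then replacing s1, s2 by two points placed symmetrically
   about the midpoint of s1 s2 in the direction of w, joined to a, c and to b, d respectively,
   shortens the tree. New points of a competitor must avoid the old vertices; the resulting
   inequalities extend to all points by continuity, since finite sets have empty interior. *)

section \<open>Graphs with doubleton edges\<close>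

definition simple_edges :: "'a set \<Rightarrow> 'a set set \<Rightarrow> bool" where
  "simple_edges V E \<longleftrightarrow> (\<forall>e\<in>E. \<exists>u v. u \<noteq> v \<and> u \<in> V \<and> v \<in> V \<and> e = {u, v})"

lemma is_tree_iff:
  "is_tree V E \<longleftrightarrow> finite V \<and> V \<noteq> {} \<and> simple_edges V E \<and> graph_connected V E \<and>
     (\<forall>e\<in>E. \<not> graph_connected V (E - {e}))"
  unfolding is_tree_def simple_edges_def ..

lemma simple_edges_empty [simp]: "simple_edges V {}"
  by (simp add: simple_edges_def)

lemma simple_edges_insert [simp]:
  "simple_edges V (insert {u, v} E) \<longleftrightarrow> u \<noteq> v \<and> u \<in> V \<and> v \<in> V \<and> simple_edges V E"
  unfolding simple_edges_def by (auto simp: doubleton_eq_iff)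

lemma simple_edges_Un [simp]:
  "simple_edges V (E \<union> F) \<longleftrightarrow> simple_edges V E \<and> simple_edges V F"
  unfolding simple_edges_def ball_Un ..

lemma simple_edgesD:
  assumes "simple_edges V E" "{x, y} \<in> E"
  shows "x \<noteq> y \<and> x \<in> V \<and> y \<in> V"
proof -
  obtain u v where "u \<noteq> v" "u \<in> V" "v \<in> V" "{x, y} = {u, v}"
    using assms unfolding simple_edges_def by blast
  then show ?thesis
    by (auto simp: doubleton_eq_iff)
qed

lemma simple_edges_edge_subset: "simple_edges V E \<Longrightarrow> e \<in> E \<Longrightarrow> e \<subseteq> V"
  unfolding simple_edges_def by auto

lemma simple_edges_subset: "simple_edges V E \<Longrightarrow> F \<subseteq> E \<Longrightarrow> simple_edges V F"
  unfolding simple_edges_def by blast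

lemma simple_edges_restrict:
  assumes "simple_edges V E" "\<And>e. e \<in> F \<Longrightarrow> e \<in> E \<and> e \<subseteq> V'"
  shows "simple_edges V' F"
  unfolding simple_edges_def
proof
  fix e assume "e \<in> F"
  then have "e \<in> E" "e \<subseteq> V'"
    using assms(2) by auto
  moreover obtain u v where "u \<noteq> v" "e = {u, v}"
    using assms(1) \<open>e \<in> E\<close> unfolding simple_edges_def by blast
  ultimately show "\<exists>u v. u \<noteq> v \<and> u \<in> V' \<and> v \<in> V' \<and> e = {u, v}"
    by auto
qed

lemma simple_edges_star:
  assumes "x \<in> V" "N \<subseteq> V - {x}"
  shows "simple_edges V ((\<lambda>n. {x, n}) ` N)"
  unfolding simple_edges_def
proof
  fix e assume "e \<in> (\<lambda>n. {x, n}) ` N"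
  then obtain n where "n \<in> N" "e = {x, n}"
    by blast
  with assms show "\<exists>u v. u \<noteq> v \<and> u \<in> V \<and> v \<in> V \<and> e = {u, v}"
    by (intro exI[of _ x] exI[of _ n]) auto
qed

lemma simple_edges_finite: "finite V \<Longrightarrow> simple_edges V E \<Longrightarrow> finite E"
  by (rule finite_subset[of E "Pow V"]) (auto simp: simple_edges_def)

lemma nbrs_subset: "simple_edges V E \<Longrightarrow> nbrs E s \<subseteq> V - {s}"
  by (auto simp: nbrs_def dest: simple_edgesD)

lemma finite_nbrs: "finite V \<Longrightarrow> simple_edges V E \<Longrightarrow> finite (nbrs E s)"
  using nbrs_subset[of V E s] finite_subset by blast

lemma edges_at_eq_image_nbrs:
  assumes "simple_edges V E"
  shows "{e \<in> E. s \<in> e} = (\<lambda>n. {s, n}) ` nbrs E s"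
proof (intro equalityI subsetI)
  fix e assume "e \<in> {e \<in> E. s \<in> e}"
  moreover from this obtain u v where "e = {u, v}"
    using assms unfolding simple_edges_def by blast
  ultimately show "e \<in> (\<lambda>n. {s, n}) ` nbrs E s"
    by (auto simp: nbrs_def insert_commute)
qed (auto simp: nbrs_def)

lemma adj_commute: "adj E x y = adj E y x"
  by (simp add: adj_def insert_commute)

lemma adj_rtranclp_sym: "(adj E)\<^sup>*\<^sup>* x y \<Longrightarrow> (adj E)\<^sup>*\<^sup>* y x"
proof (induction rule: rtranclp_induct)
  case (step y z)
  then show ?case
    by (metis adj_commute converse_rtranclp_into_rtranclp)
qed simp

lemma edge_imp_reachable: "{x, y} \<in> E \<Longrightarrow> (adj E)\<^sup>*\<^sup>* x y"
  by (simp add: adj_def r_into_rtranclp)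

lemma two_edges_imp_reachable: "{x, y} \<in> E \<Longrightarrow> {y, z} \<in> E \<Longrightarrow> (adj E)\<^sup>*\<^sup>* x z"
  by (meson edge_imp_reachable rtranclp_trans)

lemma reachable_image_doubleton:
  assumes "{y, z} = {u, v}" "(adj E)\<^sup>*\<^sup>* (f u) (f v)"
  shows "(adj E)\<^sup>*\<^sup>* (f y) (f z)"
proof -
  from assms(1) have "y = u \<and> z = v \<or> y = v \<and> z = u"
    by (simp add: doubleton_eq_iff)
  then show ?thesis
    using assms(2) adj_rtranclp_sym[OF assms(2)] by auto
qed

lemma graph_connected_transfer:
  assumes "graph_connected V E"
    and edge: "\<And>x y. {x, y} \<in> E \<Longrightarrow> (adj E')\<^sup>*\<^sup>* (f x) (f y)"
    and reach: "\<And>v. v \<in> V' \<Longrightarrow> \<exists>x\<in>V. (adj E')\<^sup>*\<^sup>* (f x) v"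
  shows "graph_connected V' E'"
  unfolding graph_connected_def
proof (intro ballI)
  have path: "(adj E')\<^sup>*\<^sup>* (f x) (f y)" if "(adj E)\<^sup>*\<^sup>* x y" for x y
    using that
  proof (induction rule: rtranclp_induct)
    case (step y z)
    then have "{y, z} \<in> E"
      by (simp add: adj_def)
    then show ?case
      using step.IH edge by (meson rtranclp_trans)
  qed simp
  fix v w assume "v \<in> V'" "w \<in> V'"
  then obtain x y where "x \<in> V" "y \<in> V" "(adj E')\<^sup>*\<^sup>* (f x) v" "(adj E')\<^sup>*\<^sup>* (f y) w"
    using reach by meson
  moreover have "(adj E)\<^sup>*\<^sup>* x y"
    using assms(1) \<open>x \<in> V\<close> \<open>y \<in> V\<close> unfolding graph_connected_def by blast
  ultimately show "(adj E')\<^sup>*\<^sup>* v w"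
    by (meson adj_rtranclp_sym path rtranclp_trans)
qed

lemma graph_connected_imp_spanning_tree:
  assumes "finite V" "V \<noteq> {}" "simple_edges V E" "graph_connected V E"
  obtains F where "F \<subseteq> E" "is_tree V F"
proof -
  let ?C = "{F. F \<subseteq> E \<and> graph_connected V F}"
  have "finite ?C"
    by (rule finite_subset[of _ "Pow E"]) (use simple_edges_finite[OF assms(1,3)] in auto)
  moreover have "E \<in> ?C"
    using assms(4) by simp
  ultimately obtain F where F: "F \<in> ?C" and min: "\<forall>F'\<in>?C. F' \<subseteq> F \<longrightarrow> F = F'"
    using finite_has_minimal[of ?C] by blast
  have bridges: "\<forall>e\<in>F. \<not> graph_connected V (F - {e})"
  proof (intro ballI notI)
    fix e assume "e \<in> F" "graph_connected V (F - {e})"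
    then have "F = F - {e}"
      using F by (intro min[rule_format]) auto
    with \<open>e \<in> F\<close> show False by blast
  qed
  have "simple_edges V F"
    using F simple_edges_subset[OF assms(3)] by simp
  with F bridges assms(1,2) have "is_tree V F"
    unfolding is_tree_iff by simp
  with F that show thesis by blast
qed

lemma tree_no_triangle:
  assumes "is_tree V E" "{x, y} \<in> E" "{x, z} \<in> E" "{y, z} \<in> E"
  shows False
proof -
  have "simple_edges V E" "graph_connected V E"
    using assms(1) unfolding is_tree_iff by blast+
  then have "y \<noteq> z" "x \<noteq> z" "x \<noteq> y"
    using assms(2-4) by (auto dest: simple_edgesD)
  let ?E' = "E - {{x, y}}"
  have "(adj ?E')\<^sup>*\<^sup>* x y"
  proof -
    have "adj ?E' x z" "adj ?E' z y"
      using assms(3,4) \<open>y \<noteq> z\<close> \<open>x \<noteq> z\<close> by (auto simp: adj_def doubleton_eq_iff insert_commute)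
    then show ?thesis by auto
  qed
  then have "(adj ?E')\<^sup>*\<^sup>* u v" if "{u, v} \<in> E" for u v
  proof (cases "{u, v} = {x, y}")
    case True
    then show ?thesis
      using \<open>(adj ?E')\<^sup>*\<^sup>* x y\<close> adj_rtranclp_sym by (auto simp: doubleton_eq_iff)
  next
    case False
    then show ?thesis
      using that by (simp add: adj_def r_into_rtranclp)
  qed
  then have "graph_connected V ?E'"
    using graph_connected_transfer[OF \<open>graph_connected V E\<close>, of ?E' id V] by auto
  with assms(1,2) show False
    unfolding is_tree_def by blast
qed

section \<open>Exchange arguments\<close>

lemma edge_len_doubleton [simp]: "edge_len {x, y} = dist x y"
  unfolding edge_len_def
  by (rule some_equality) (auto simp: doubleton_eq_iff dist_commute)

lemma edge_len_nonneg: "simple_edges V E \<Longrightarrow> e \<in> E \<Longrightarrow> 0 \<le> edge_len e"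
  unfolding simple_edges_def by auto

lemma tree_cost_star:
  assumes "s \<notin> N"
  shows "tree_cost ((\<lambda>n. {s, n}) ` N) = (\<Sum>n\<in>N. dist s n)"
proof -
  have "inj_on (\<lambda>n. {s, n}) N"
    using assms by (auto intro!: inj_onI simp: doubleton_eq_iff)
  then show ?thesis
    unfolding tree_cost_def by (simp add: sum.reindex)
qed

lemma optimal_steiner_treeD:
  "optimal_steiner_tree P V E \<Longrightarrow> simple_edges V E \<and> graph_connected V E \<and> finite V \<and> P \<subseteq> V"
  unfolding optimal_steiner_tree_def steiner_tree_def is_tree_iff by auto

lemma edges_at_adjacent_vertices:
  assumes "simple_edges V E" "nbrs E s1 = {s2, a, b}" "nbrs E s2 = {s1, c, d}"
  shows "{e \<in> E. s1 \<in> e \<or> s2 \<in> e} = {{s1, s2}, {s1, a}, {s1, b}, {s2, c}, {s2, d}}"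
proof -
  have "{e \<in> E. s1 \<in> e \<or> s2 \<in> e} = {e \<in> E. s1 \<in> e} \<union> {e \<in> E. s2 \<in> e}"
    by auto
  also have "\<dots> = {{s1, s2}, {s1, a}, {s1, b}} \<union> {{s2, s1}, {s2, c}, {s2, d}}"
    using edges_at_eq_image_nbrs[OF assms(1)] assms(2,3) by simp
  finally show ?thesis
    by (simp add: insert_commute)
qed

lemma graph_connected_relocate:
  assumes "graph_connected V E" "simple_edges V E" "s \<in> V"
  shows "graph_connected (insert x (V - {s})) (E - {e \<in> E. s \<in> e} \<union> (\<lambda>n. {x, n}) ` nbrs E s)"
    (is "graph_connected ?V' ?E'")
proof (rule graph_connected_transfer[OF assms(1), where f = "\<lambda>y. if y = s then x else y"])
  show "(adj ?E')\<^sup>*\<^sup>* (if y = s then x else y) (if z = s then x else z)" if "{y, z} \<in> E" for y z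
  proof (rule edge_imp_reachable)
    show "{if y = s then x else y, if z = s then x else z} \<in> ?E'"
    proof (cases "y = s \<or> z = s")
      case True
      moreover have "y \<noteq> z"
        using simple_edgesD[OF assms(2) that] by simp
      ultimately have "{if y = s then x else y, if z = s then x else z} = {x, if y = s then z else y}"
        "(if y = s then z else y) \<in> nbrs E s"
        using that by (auto simp: nbrs_def insert_commute)
      then show ?thesis by auto
    qed (use that in auto)
  qed
  show "\<exists>y\<in>V. (adj ?E')\<^sup>*\<^sup>* (if y = s then x else y) v" if "v \<in> ?V'" for v
  proof (cases "v = x")
    case True
    then show ?thesis
      using assms(3) by (intro bexI[of _ s]) auto
  next
    case False
    then show ?thesis
      using that by (intro bexI[of _ v]) auto
  qed
qed

lemma graph_connected_split:
  assumes "graph_connected V E" "s \<in> V" "{s, a} \<in> E" "{s, c} \<in> E"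
  shows "graph_connected (insert p V) (E - {{s, a}, {s, c}} \<union> {{p, a}, {p, c}, {p, s}})"
    (is "graph_connected ?V' ?E'")
proof (rule graph_connected_transfer[OF assms(1), where f = id])
  have "{s, p} \<in> ?E'" "{p, a} \<in> ?E'" "{p, c} \<in> ?E'"
    by (simp_all add: insert_commute)
  then have paths: "(adj ?E')\<^sup>*\<^sup>* (id s) (id a)" "(adj ?E')\<^sup>*\<^sup>* (id s) (id c)"
    by (simp_all add: two_edges_imp_reachable)
  show "(adj ?E')\<^sup>*\<^sup>* (id y) (id z)" if "{y, z} \<in> E" for y z
  proof (cases "{y, z} \<in> {{s, a}, {s, c}}")
    case True
    then consider "{y, z} = {s, a}" | "{y, z} = {s, c}"
      by blast
    then show ?thesis
      by cases (erule reachable_image_doubleton, rule paths)+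
  qed (use that in \<open>simp add: edge_imp_reachable\<close>)
  show "\<exists>y\<in>V. (adj ?E')\<^sup>*\<^sup>* (id y) v" if "v \<in> ?V'" for v
  proof (cases "v = p")
    case True
    then show ?thesis
      using assms(2) \<open>{s, p} \<in> ?E'\<close> by (auto intro!: bexI[of _ s] edge_imp_reachable)
  qed (use that in auto)
qed

lemma graph_connected_swap:
  assumes "graph_connected V E" "simple_edges V E"
    and N1: "nbrs E s1 = {s2, a, b}" and N2: "nbrs E s2 = {s1, c, d}"
    and distinct: "distinct [s1, s2, a, b, c, d]"
  shows "graph_connected (insert p (insert q (V - {s1, s2})))
    (E - {{s1, s2}, {s1, a}, {s1, b}, {s2, c}, {s2, d}} \<union> {{p, a}, {p, c}, {p, q}, {q, b}, {q, d}})"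
    (is "graph_connected ?V' (E - ?R \<union> ?A)")
proof (rule graph_connected_transfer[OF assms(1), where f = "\<lambda>y. if y = s1 then p else if y = s2 then q else y"])
  let ?E' = "E - ?R \<union> ?A"
  let ?f = "\<lambda>y. if y = s1 then p else if y = s2 then q else y"
  have R: "{e \<in> E. s1 \<in> e \<or> s2 \<in> e} = ?R"
    using edges_at_adjacent_vertices[OF assms(2) N1 N2] .
  have f: "?f s1 = p" "?f s2 = q" "?f a = a" "?f b = b" "?f c = c" "?f d = d"
    using distinct by auto
  have e: "{p, q} \<in> ?E'" "{p, a} \<in> ?E'" "{p, c} \<in> ?E'" "{q, p} \<in> ?E'" "{q, b} \<in> ?E'" "{q, d} \<in> ?E'"
    by (simp_all add: insert_commute)
  have paths: "(adj ?E')\<^sup>*\<^sup>* (?f s1) (?f s2)" "(adj ?E')\<^sup>*\<^sup>* (?f s1) (?f a)"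
    "(adj ?E')\<^sup>*\<^sup>* (?f s1) (?f b)" "(adj ?E')\<^sup>*\<^sup>* (?f s2) (?f c)" "(adj ?E')\<^sup>*\<^sup>* (?f s2) (?f d)"
    unfolding f
    using edge_imp_reachable[OF e(1)] edge_imp_reachable[OF e(2)] two_edges_imp_reachable[OF e(1) e(5)]
      two_edges_imp_reachable[OF e(4) e(3)] edge_imp_reachable[OF e(6)] by blast+
  show "(adj ?E')\<^sup>*\<^sup>* (?f y) (?f z)" if "{y, z} \<in> E" for y z
  proof (cases "{y, z} \<in> ?R")
    case True
    then show ?thesis
      by (elim insertE emptyE) (erule reachable_image_doubleton, rule paths)+
  next
    case False
    then have "s1 \<notin> {y, z}" "s2 \<notin> {y, z}"
      using that unfolding R[symmetric] by simp_all
    then have "?f y = y" "?f z = z"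
      by auto
    moreover have "(adj ?E')\<^sup>*\<^sup>* y z"
      using False that by (simp add: edge_imp_reachable)
    ultimately show ?thesis
      by simp
  qed
  show "\<exists>y\<in>V. (adj ?E')\<^sup>*\<^sup>* (?f y) v" if v: "v \<in> ?V'" for v
  proof -
    have "s1 \<in> V" "s2 \<in> V"
      using nbrs_subset[OF assms(2), of s1] nbrs_subset[OF assms(2), of s2] N1 N2 by auto
    consider "v = p" | "v = q" | "v \<in> V - {s1, s2}"
      using v by blast
    then show ?thesis
    proof cases
      case 1
      with \<open>s1 \<in> V\<close> f(1) show ?thesis
        by (intro bexI[of _ s1]) auto
    next
      case 2
      with \<open>s2 \<in> V\<close> f(2) show ?thesis
        by (intro bexI[of _ s2]) auto
    next
      case 3
      then show ?thesis
        by (intro bexI[of _ v]) auto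
    qed
  qed
qed

text \<open>The competitor need not be a tree: it contains a spanning tree, which costs no more.\<close>
lemma optimal_steiner_tree_exchange:
  assumes opt: "optimal_steiner_tree P V E"
    and "R \<subseteq> E" "P \<subseteq> V'" "finite V'" "V' \<noteq> {}"
    and kept: "\<And>e. e \<in> E - R \<Longrightarrow> e \<subseteq> V'"
    and new: "simple_edges V' A"
    and connected: "graph_connected V' (E - R \<union> A)"
  shows "tree_cost R \<le> tree_cost A"
proof -
  let ?E' = "E - R \<union> A"
  have "is_tree V E" and "finite P"
    and min: "\<And>V' E'. steiner_tree P V' E' \<Longrightarrow> tree_cost E \<le> tree_cost E'"
    using opt unfolding optimal_steiner_tree_def steiner_tree_def by auto
  then have "simple_edges V E" "finite V"
    unfolding is_tree_iff by auto
  then have "finite E"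
    by (simp add: simple_edges_finite)
  have "simple_edges V' (E - R)"
    using simple_edges_restrict[OF \<open>simple_edges V E\<close>, of "E - R"] kept by auto
  then have simple': "simple_edges V' ?E'"
    using new by simp
  then have "finite ?E'"
    using \<open>finite V'\<close> by (simp add: simple_edges_finite)
  obtain F where "F \<subseteq> ?E'" "is_tree V' F"
    using graph_connected_imp_spanning_tree[OF \<open>finite V'\<close> \<open>V' \<noteq> {}\<close> simple' connected] by auto
  have "tree_cost (E - R) + tree_cost R = tree_cost E"
    unfolding tree_cost_def using sum.subset_diff[OF \<open>R \<subseteq> E\<close> \<open>finite E\<close>, of edge_len] by simp
  also have "tree_cost E \<le> tree_cost F"
    using min \<open>is_tree V' F\<close> \<open>finite P\<close> \<open>P \<subseteq> V'\<close> unfolding steiner_tree_def by auto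
  also have "\<dots> \<le> tree_cost ?E'"
    unfolding tree_cost_def using \<open>F \<subseteq> ?E'\<close> \<open>finite ?E'\<close>
    by (intro sum_mono2) (auto intro: edge_len_nonneg[OF simple'])
  also have "\<dots> \<le> tree_cost (E - R) + tree_cost A"
  proof -
    have "0 \<le> tree_cost ((E - R) \<inter> A)"
      unfolding tree_cost_def by (auto intro!: sum_nonneg edge_len_nonneg[OF simple'])
    moreover have "finite A"
      using \<open>finite ?E'\<close> by simp
    ultimately show ?thesis
      unfolding tree_cost_def using sum.union_inter[of "E - R" A edge_len] \<open>finite E\<close> by simp
  qed
  finally show ?thesis by simp
qed

lemma optimal_steiner_tree_relocate:
  fixes P V :: "'a::euclidean_space set"
  assumes opt: "optimal_steiner_tree P V E" and s: "s \<in> V - P" and x: "x \<notin> V"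
  shows "(\<Sum>n\<in>nbrs E s. dist s n) \<le> (\<Sum>n\<in>nbrs E s. dist x n)"
proof -
  have simple: "simple_edges V E" and "finite V" "P \<subseteq> V" "graph_connected V E"
    using optimal_steiner_treeD[OF opt] by auto
  have N: "nbrs E s \<subseteq> V - {s}"
    using nbrs_subset[OF simple] .
  have "tree_cost {e \<in> E. s \<in> e} \<le> tree_cost ((\<lambda>n. {x, n}) ` nbrs E s)"
  proof (rule optimal_steiner_tree_exchange[OF opt _ _ _ _ _ _ graph_connected_relocate[OF \<open>graph_connected V E\<close> simple, of s]])
    show "e \<subseteq> insert x (V - {s})" if "e \<in> E - {e \<in> E. s \<in> e}" for e
      using that simple_edges_edge_subset[OF simple, of e] by auto
    show "simple_edges (insert x (V - {s})) ((\<lambda>n. {x, n}) ` nbrs E s)"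
      using N x by (intro simple_edges_star) auto
  qed (use s \<open>finite V\<close> \<open>P \<subseteq> V\<close> in auto)
  moreover have "s \<notin> nbrs E s" "x \<notin> nbrs E s"
    using N x by auto
  ultimately show ?thesis
    using edges_at_eq_image_nbrs[OF simple, of s] by (simp add: tree_cost_star)
qed

lemma optimal_steiner_tree_split:
  fixes P V :: "'a::euclidean_space set"
  assumes opt: "optimal_steiner_tree P V E"
    and a: "a \<in> nbrs E s" and c: "c \<in> nbrs E s" and "a \<noteq> c" and p: "p \<notin> V"
  shows "dist s a + dist s c \<le> dist p a + dist p c + dist p s"
proof -
  have simple: "simple_edges V E" and "finite V" "P \<subseteq> V" "graph_connected V E"
    using optimal_steiner_treeD[OF opt] by auto
  have edges: "{s, a} \<in> E" "{s, c} \<in> E"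
    using a c by (auto simp: nbrs_def)
  then have V: "s \<in> V" "a \<in> V" "c \<in> V" "s \<noteq> a" "s \<noteq> c"
    using simple_edgesD[OF simple] by blast+
  have "tree_cost {{s, a}, {s, c}} \<le> tree_cost {{p, a}, {p, c}, {p, s}}"
  proof (rule optimal_steiner_tree_exchange[OF opt _ _ _ _ _ _ graph_connected_split[OF \<open>graph_connected V E\<close> V(1) edges]])
    show "e \<subseteq> insert p V" if "e \<in> E - {{s, a}, {s, c}}" for e
      using that simple_edges_edge_subset[OF simple] by blast
  qed (use edges V p \<open>finite V\<close> \<open>P \<subseteq> V\<close> in auto)
  moreover have "p \<noteq> a" "p \<noteq> c" "p \<noteq> s"
    using V p by auto
  ultimately show ?thesis
    using V \<open>a \<noteq> c\<close> by (simp add: tree_cost_def doubleton_eq_iff)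
qed

lemma optimal_steiner_tree_swap:
  fixes P V :: "'a::euclidean_space set"
  assumes opt: "optimal_steiner_tree P V E" and "s1 \<notin> P" "s2 \<notin> P"
    and N1: "nbrs E s1 = {s2, a, b}" and N2: "nbrs E s2 = {s1, c, d}"
    and distinct: "distinct [s1, s2, a, b, c, d]"
    and p: "p \<notin> V" and q: "q \<notin> V" and "p \<noteq> q"
  shows "dist s1 a + dist s1 b + dist s1 s2 + dist s2 c + dist s2 d
    \<le> dist p a + dist p c + dist p q + dist q b + dist q d"
proof -
  let ?R = "{{s1, s2}, {s1, a}, {s1, b}, {s2, c}, {s2, d}}"
  let ?V' = "insert p (insert q (V - {s1, s2}))"
  have simple: "simple_edges V E" and "finite V" "P \<subseteq> V" "graph_connected V E"
    using optimal_steiner_treeD[OF opt] by auto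
  have R: "{e \<in> E. s1 \<in> e \<or> s2 \<in> e} = ?R"
    using edges_at_adjacent_vertices[OF simple N1 N2] .
  have V: "s1 \<in> V" "s2 \<in> V" "a \<in> V" "b \<in> V" "c \<in> V" "d \<in> V"
    using nbrs_subset[OF simple, of s1] nbrs_subset[OF simple, of s2] N1 N2 by auto
  have "tree_cost ?R \<le> tree_cost {{p, a}, {p, c}, {p, q}, {q, b}, {q, d}}"
  proof (rule optimal_steiner_tree_exchange[OF opt _ _ _ _ _ _
        graph_connected_swap[OF \<open>graph_connected V E\<close> simple N1 N2 distinct]])
    show "?R \<subseteq> E"
      unfolding R[symmetric] by (rule Collect_restrict)
    show "e \<subseteq> ?V'" if "e \<in> E - ?R" for e
    proof -
      have "s1 \<notin> e" "s2 \<notin> e"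
        using that unfolding R[symmetric] by simp_all
      then show ?thesis
        using that simple_edges_edge_subset[OF simple, of e] by auto
    qed
  qed (use V p q distinct \<open>p \<noteq> q\<close> \<open>finite V\<close> \<open>P \<subseteq> V\<close> assms(2,3) in auto)
  moreover have "p \<noteq> a" "p \<noteq> b" "p \<noteq> c" "p \<noteq> d" "q \<noteq> a" "q \<noteq> b" "q \<noteq> c" "q \<noteq> d"
    using V p q by auto
  ultimately show ?thesis
    using V distinct \<open>p \<noteq> q\<close> by (simp add: tree_cost_def doubleton_eq_iff)
qed

section \<open>Inequalities in inner product spaces\<close>

lemma continuous_le_off_finite:
  fixes f g :: "'a::{real_normed_vector, perfect_space} \<Rightarrow> real"
  assumes "continuous_on UNIV f" "continuous_on UNIV g" "finite S"
    and "\<And>x. x \<notin> S \<Longrightarrow> f x \<le> g x"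
  shows "f x \<le> g x"
proof -
  have "closure (- S) \<subseteq> {x. f x \<le> g x}"
    using assms by (intro closure_minimal closed_Collect_le) auto
  moreover have "closure (- S) = UNIV"
    using empty_interior_finite[OF \<open>finite S\<close>] by (simp add: closure_interior)
  ultimately show ?thesis
    by auto
qed

lemma sgn_diff_commute:
  fixes x y :: "'a::real_normed_vector"
  shows "sgn (x - y) = - sgn (y - x)"
  using sgn_minus[of "y - x"] by simp

lemma scaleR_norm_sgn: "norm x *\<^sub>R sgn x = x"
  by (cases "x = 0") (simp_all add: sgn_div_norm)

lemma dist_shift_toward:
  fixes s a :: "'a::real_normed_vector"
  assumes "0 \<le> L" "L \<le> dist s a"
  shows "dist (s + L *\<^sub>R sgn (a - s)) a = dist s a - L"
proof -
  have "a - s = dist s a *\<^sub>R sgn (a - s)"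
    using scaleR_norm_sgn[of "a - s"] by (simp add: dist_norm norm_minus_commute)
  then have "a - (s + L *\<^sub>R sgn (a - s)) = (dist s a - L) *\<^sub>R sgn (a - s)"
    by (simp add: algebra_simps)
  then show ?thesis
    using assms by (cases "a = s") (simp_all add: dist_norm norm_minus_commute[of _ a] norm_sgn)
qed

lemma sum_sgn_eq_0_if_minimizes_dist_sum:
  fixes s :: "'a::real_inner"
  assumes "s \<notin> N" and min: "\<And>x. (\<Sum>n\<in>N. dist s n) \<le> (\<Sum>n\<in>N. dist x n)"
  shows "(\<Sum>n\<in>N. sgn (s - n)) = 0"
proof -
  let ?G = "\<Sum>n\<in>N. sgn (s - n)"
  have "((\<lambda>x. \<Sum>n\<in>N. dist x n) has_derivative (\<lambda>h. \<Sum>n\<in>N. h \<bullet> sgn (s - n))) (at s)"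
    unfolding dist_norm
  proof (rule has_derivative_sum)
    fix n assume "n \<in> N"
    then have "s - n \<noteq> 0"
      using assms(1) by auto
    then show "((\<lambda>x. norm (x - n)) has_derivative (\<lambda>h. h \<bullet> sgn (s - n))) (at s)"
      using has_derivative_compose[OF has_derivative_diff[OF has_derivative_ident has_derivative_const]
          has_derivative_norm] by simp
  qed
  then have "(\<lambda>h. \<Sum>n\<in>N. h \<bullet> sgn (s - n)) = (\<lambda>h. 0)"
    using min by (intro differential_zero_maxmin[of s UNIV]) auto
  then have "?G \<bullet> ?G = 0"
    by (metis inner_sum_right)
  then show ?thesis
    by simp
qed

lemma norm_add_le_quadratic:
  fixes x h :: "'a::real_inner"
  assumes "x \<noteq> 0"
  shows "norm (x + h) \<le> norm x + sgn x \<bullet> h + (h \<bullet> h) / (2 * norm x)"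
proof -
  have "2 * norm x * norm (x + h) \<le> (norm x)\<^sup>2 + (norm (x + h))\<^sup>2"
    using sum_squares_bound[of "norm x" "norm (x + h)"] by (simp add: power2_eq_square mult.assoc)
  also have "(norm (x + h))\<^sup>2 = (norm x)\<^sup>2 + 2 * (x \<bullet> h) + h \<bullet> h"
    by (simp add: power2_norm_eq_inner inner_add_left inner_add_right inner_commute)
  finally show ?thesis
    using assms by (simp add: sgn_div_norm field_simps power2_eq_square)
qed

lemma nonpos_if_le_mult_pos:
  fixes c K :: real
  assumes "\<And>t. 0 < t \<Longrightarrow> c \<le> t * K"
  shows "c \<le> 0"
proof (rule field_le_epsilon)
  fix e :: real assume "0 < e"
  then have "c \<le> e / (\<bar>K\<bar> + 1) * K"
    by (intro assms) simp
  also have "\<dots> \<le> e / (\<bar>K\<bar> + 1) * \<bar>K\<bar>"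
    using \<open>0 < e\<close> by (intro mult_left_mono) auto
  also have "\<dots> \<le> e"
    using \<open>0 < e\<close> by (simp add: field_simps)
  finally show "c \<le> 0 + e"
    by simp
qed

text \<open>Moving p from s to s - t w, where w = sgn (s - a) + sgn (s - c), changes the cost by
  t (norm w - norm w ^ 2) up to second order.\<close>
lemma inner_sgn_le_if_no_shortcut:
  fixes s a c :: "'a::real_inner"
  assumes "s \<noteq> a" "s \<noteq> c"
    and no_shortcut: "\<And>p. dist s a + dist s c \<le> dist p a + dist p c + dist p s"
  shows "sgn (s - a) \<bullet> sgn (s - c) \<le> - 1 / 2"
proof -
  let ?w = "sgn (s - a) + sgn (s - c)"
  let ?K = "(?w \<bullet> ?w) / (2 * dist s a) + (?w \<bullet> ?w) / (2 * dist s c)"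
  have unit: "sgn (s - a) \<bullet> sgn (s - a) = 1" "sgn (s - c) \<bullet> sgn (s - c) = 1"
    using assms(1,2) by (simp_all add: dot_square_norm norm_sgn)
  have shortcut: "?w \<bullet> ?w - norm ?w \<le> t * ?K" if "0 < t" for t
  proof -
    let ?p = "s - t *\<^sub>R ?w"
    have "dist ?p a \<le> dist s a - t * (sgn (s - a) \<bullet> ?w) + t\<^sup>2 * (?w \<bullet> ?w) / (2 * dist s a)"
      using norm_add_le_quadratic[of "s - a" "- t *\<^sub>R ?w"] assms(1)
      by (simp add: dist_norm algebra_simps power2_eq_square)
    moreover have "dist ?p c \<le> dist s c - t * (sgn (s - c) \<bullet> ?w) + t\<^sup>2 * (?w \<bullet> ?w) / (2 * dist s c)"
      using norm_add_le_quadratic[of "s - c" "- t *\<^sub>R ?w"] assms(2)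
      by (simp add: dist_norm algebra_simps power2_eq_square)
    moreover have "dist ?p s = t * norm ?w"
      using \<open>0 < t\<close> by (simp add: dist_norm)
    ultimately have "t * (?w \<bullet> ?w - norm ?w) \<le> t * (t * ?K)"
      using no_shortcut[of ?p] by (simp add: inner_add_left algebra_simps add_divide_distrib power2_eq_square)
    then show ?thesis
      using \<open>0 < t\<close> by simp
  qed
  have "?w \<bullet> ?w - norm ?w \<le> 0"
    using nonpos_if_le_mult_pos[OF shortcut] .
  then have "norm ?w * (norm ?w - 1) \<le> 0"
    by (simp add: dot_square_norm power2_eq_square algebra_simps)
  then have "norm ?w \<le> 1"
    by (cases "norm ?w \<le> 1") (simp_all add: mult_le_0_iff)
  then have "?w \<bullet> ?w \<le> 1"
    by (simp add: dot_square_norm power_le_one)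
  then show ?thesis
    using unit by (simp add: inner_add_left inner_add_right inner_commute)
qed

lemma card_le_3_if_pairwise_obtuse:
  fixes g :: "'b \<Rightarrow> 'a::real_inner"
  assumes "finite N" and unit: "\<And>n. n \<in> N \<Longrightarrow> norm (g n) = 1"
    and obtuse: "\<And>m n. m \<in> N \<Longrightarrow> n \<in> N \<Longrightarrow> m \<noteq> n \<Longrightarrow> g n \<bullet> g m \<le> - 1 / 2"
  shows "card N \<le> 3"
proof -
  let ?k = "real (card N)"
  have row: "(\<Sum>n\<in>N. g n \<bullet> g m) \<le> 1 - (?k - 1) / 2" if "m \<in> N" for m
  proof -
    have "(\<Sum>n\<in>N. g n \<bullet> g m) = g m \<bullet> g m + (\<Sum>n\<in>N - {m}. g n \<bullet> g m)"
      using sum.remove[OF \<open>finite N\<close> that] by simp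
    also have "\<dots> \<le> 1 + real (card (N - {m})) * (- 1 / 2)"
    proof -
      have "(\<Sum>n\<in>N - {m}. g n \<bullet> g m) \<le> real (card (N - {m})) * (- 1 / 2)"
        by (rule sum_bounded_above) (use obtuse that in auto)
      then show ?thesis
        using unit[OF that] by (simp add: dot_square_norm)
    qed
    also have "real (card (N - {m})) = ?k - 1"
    proof -
      have "0 < card N"
        using \<open>finite N\<close> that card_gt_0_iff by blast
      then show ?thesis
        using \<open>finite N\<close> that by (simp add: of_nat_diff Suc_le_eq)
    qed
    finally show ?thesis
      by simp
  qed
  have "0 \<le> (\<Sum>m\<in>N. g m) \<bullet> (\<Sum>n\<in>N. g n)"
    by simp
  also have "\<dots> = (\<Sum>m\<in>N. \<Sum>n\<in>N. g n \<bullet> g m)"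
    by (simp add: inner_sum_left inner_sum_right)
  also have "\<dots> \<le> ?k * (1 - (?k - 1) / 2)"
    using sum_mono[OF row] by simp
  finally have "0 \<le> ?k * (3 - ?k)"
    by (simp add: field_simps)
  then show ?thesis
    by (cases "card N = 0") (simp_all add: zero_le_mult_iff)
qed

lemma in_open_segment_if_sgn_add_eq_0:
  fixes s a b :: "'a::real_normed_vector"
  assumes "s \<noteq> a" "s \<noteq> b" and balanced: "sgn (s - a) + sgn (s - b) = 0"
  shows "s \<in> open_segment a b"
proof -
  let ?e = "sgn (s - a)"
  define \<alpha> where "\<alpha> = dist s a"
  define \<beta> where "\<beta> = dist s b"
  have "0 < \<alpha>" "0 < \<beta>"
    using assms(1,2) by (simp_all add: \<alpha>_def \<beta>_def)
  have "?e = - sgn (s - b)"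
    using balanced by (simp add: eq_neg_iff_add_eq_0)
  then have "sgn (b - s) = ?e"
    using sgn_diff_commute[of b s] by simp
  then have bs: "b - s = \<beta> *\<^sub>R ?e"
    using scaleR_norm_sgn[of "b - s"] by (simp add: \<beta>_def dist_norm norm_minus_commute)
  have sa: "s - a = \<alpha> *\<^sub>R ?e"
    using scaleR_norm_sgn[of "s - a"] by (simp add: \<alpha>_def dist_norm)
  have "b - a = (s - a) + (b - s)"
    by simp
  also have "\<dots> = (\<alpha> + \<beta>) *\<^sub>R ?e"
    by (simp only: scaleR_add_left sa[symmetric] bs[symmetric])
  finally have ba: "b - a = (\<alpha> + \<beta>) *\<^sub>R ?e" .
  have "a \<noteq> b"
    using ba \<open>0 < \<alpha>\<close> \<open>0 < \<beta>\<close> assms(1) by (auto simp: sgn_zero_iff)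
  define u where "u = \<alpha> / (\<alpha> + \<beta>)"
  have "0 < u" "u < 1"
    using \<open>0 < \<alpha>\<close> \<open>0 < \<beta>\<close> by (simp_all add: u_def field_simps)
  have "u *\<^sub>R (b - a) = \<alpha> *\<^sub>R ?e"
    using \<open>0 < \<alpha>\<close> \<open>0 < \<beta>\<close> by (simp add: ba u_def)
  then have "u *\<^sub>R (b - a) = s - a"
    by (simp only: sa[symmetric])
  then have "s = (1 - u) *\<^sub>R a + u *\<^sub>R b"
    by (simp add: algebra_simps)
  with \<open>0 < u\<close> \<open>u < 1\<close> \<open>a \<noteq> b\<close> show ?thesis
    unfolding in_segment by blast
qed

lemma inner_eq_neg_half_if_unit_sum_eq_0:
  fixes x y z :: "'a::real_inner"
  assumes "norm x = 1" "norm y = 1" "norm z = 1" "x + y + z = 0"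
  shows "x \<bullet> y = - 1 / 2"
proof -
  have "z = - (x + y)"
    using minus_unique[OF assms(4)] by simp
  then have "z \<bullet> z = x \<bullet> x + 2 * (x \<bullet> y) + y \<bullet> y"
    by (simp add: inner_diff_left inner_diff_right inner_commute)
  with assms(1-3) show ?thesis
    by (simp add: dot_square_norm)
qed

lemma norm_sq_scaleR_sum3:
  fixes x y z :: "'a::real_inner"
  assumes "norm x = 1" "norm y = 1" "norm z = 1"
  shows "(norm (\<alpha> *\<^sub>R x + \<beta> *\<^sub>R y + \<gamma> *\<^sub>R z))\<^sup>2 = \<alpha>\<^sup>2 + \<beta>\<^sup>2 + \<gamma>\<^sup>2
    + 2 * \<alpha> * \<beta> * (x \<bullet> y) + 2 * \<alpha> * \<gamma> * (x \<bullet> z) + 2 * \<beta> * \<gamma> * (y \<bullet> z)"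
proof -
  have "x \<bullet> x = 1" "y \<bullet> y = 1" "z \<bullet> z = 1"
    using assms by (simp_all add: dot_square_norm)
  then show ?thesis
    unfolding power2_norm_eq_inner
    by (simp add: inner_add_left inner_add_right inner_commute power2_eq_square algebra_simps)
qed

lemma swap_parameter_exists:
  fixes l L r :: real
  assumes "0 < l" "0 < L" "r \<le> 2" "L + l < r * L"
  obtains t where "0 < t" "0 < 4 * L + l - 2 * t * r"
    "16 * (l\<^sup>2 / 4 + l * L / 2 + L\<^sup>2 + r\<^sup>2 * t * (t - L)) < (4 * L + l - 2 * t * r)\<^sup>2"
proof
  define M where "M = 4 * r * L - 4 * L - l"
  define t where "t = M / (6 * r)" \<comment> \<open>maximises the gap in the last inequality\<close>
  have "L < r * L"
    using assms(1,4) by linarith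
  then have "0 < r"
    using mult_nonpos_nonneg[of r L] \<open>0 < L\<close> by (cases "r \<le> 0") auto
  have "3 * l < M"
    using assms(4) unfolding M_def by simp
  then show "0 < t"
    using \<open>0 < l\<close> \<open>0 < r\<close> by (simp add: t_def)
  have rt: "r * t = M / 6"
    using \<open>0 < r\<close> by (simp add: t_def)
  have "M \<le> 4 * L - l"
    using mult_right_mono[OF assms(3), of L] \<open>0 < L\<close> unfolding M_def by simp
  then show "0 < 4 * L + l - 2 * t * r"
    using rt \<open>0 < l\<close> \<open>0 < L\<close> by (simp add: mult.commute)
  have "(4 * L + l - 2 * t * r)\<^sup>2 - 16 * (l\<^sup>2 / 4 + l * L / 2 + L\<^sup>2 + r\<^sup>2 * t * (t - L))
      = 4 * (r * t) * M - 12 * (r * t)\<^sup>2 - 3 * l\<^sup>2"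
    unfolding M_def by (simp add: power2_eq_square algebra_simps)
  also have "\<dots> = M\<^sup>2 / 3 - 3 * l\<^sup>2"
    unfolding rt by (simp add: power2_eq_square)
  also have "\<dots> > 0"
    using \<open>3 * l < M\<close> \<open>0 < l\<close> power_strict_mono[of "3 * l" M 2] by (simp add: power_mult_distrib)
  finally show "16 * (l\<^sup>2 / 4 + l * L / 2 + L\<^sup>2 + r\<^sup>2 * t * (t - L)) < (4 * L + l - 2 * t * r)\<^sup>2"
    by simp
qed

lemma sqrt6_div2_le_norm_add:
  fixes x y :: "'a::real_inner"
  assumes "norm x = 1" "norm y = 1" "- 1 / 4 \<le> x \<bullet> y"
  shows "sqrt 6 / 2 \<le> norm (x + y)"
proof (rule power2_le_imp_le)
  have "(norm (x + y))\<^sup>2 = 2 + 2 * (x \<bullet> y)"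
    using norm_sq_scaleR_sum3[OF assms(1,1,2), of 0 1 1] by simp
  with assms(3) show "(sqrt 6 / 2)\<^sup>2 \<le> (norm (x + y))\<^sup>2"
    by (simp add: power_divide)
qed simp

lemma swap_leg_lengths:
  fixes u ea ec :: "'a::real_inner" and l L t :: real
  assumes unit: "norm u = 1" "norm ea = 1" "norm ec = 1"
    and angles: "u \<bullet> ea = - 1 / 2" "u \<bullet> ec = 1 / 2"
  defines "Q \<equiv> l\<^sup>2 / 4 + l * L / 2 + L\<^sup>2 + (norm (ea + ec))\<^sup>2 * t * (t - L)"
  shows "(norm ((l / 2) *\<^sub>R u + (t - L) *\<^sub>R ea + t *\<^sub>R ec))\<^sup>2 = Q"
    and "(norm ((- l / 2) *\<^sub>R u + t *\<^sub>R ea + (t - L) *\<^sub>R ec))\<^sup>2 = Q"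
    and "(norm ((l / 2 + L) *\<^sub>R u + (L - t) *\<^sub>R ea + (- t) *\<^sub>R ec))\<^sup>2 = Q"
    and "(norm ((- l / 2 - L) *\<^sub>R u + (- t) *\<^sub>R ea + (L - t) *\<^sub>R ec))\<^sup>2 = Q"
proof -
  note norm3 = norm_sq_scaleR_sum3[OF unit]
  have "(norm (ea + ec))\<^sup>2 = 2 + 2 * (ea \<bullet> ec)"
    using norm3[of 0 1 1] by simp
  then have Q: "Q = l\<^sup>2 / 4 + l * L / 2 + L\<^sup>2 + (2 + 2 * (ea \<bullet> ec)) * t * (t - L)"
    unfolding Q_def by simp
  show "(norm ((l / 2) *\<^sub>R u + (t - L) *\<^sub>R ea + t *\<^sub>R ec))\<^sup>2 = Q"
    "(norm ((- l / 2) *\<^sub>R u + t *\<^sub>R ea + (t - L) *\<^sub>R ec))\<^sup>2 = Q"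
    "(norm ((l / 2 + L) *\<^sub>R u + (L - t) *\<^sub>R ea + (- t) *\<^sub>R ec))\<^sup>2 = Q"
    "(norm ((- l / 2 - L) *\<^sub>R u + (- t) *\<^sub>R ea + (L - t) *\<^sub>R ec))\<^sup>2 = Q"
    unfolding norm3 angles Q by (simp_all add: power2_eq_square algebra_simps)
qed

text \<open>The four points s1 + L ea, ..., s2 + L ed lie at distance L from s1 and s2 on the outer
  edges, and the tree through s1 and s2 joins them at cost 4 L + l.\<close>
lemma swap_beats_short_edge:
  fixes s1 s2 u ea eb ec ed :: "'a::real_inner"
  assumes unit: "norm u = 1" "norm ea = 1" "norm eb = 1" "norm ec = 1" "norm ed = 1"
    and balanced: "ea + eb + u = 0" "ec + ed = u"
    and "- 1 / 4 \<le> ea \<bullet> ec"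
    and s2: "s2 = s1 + l *\<^sub>R u" and "0 < l" "0 < L" and short: "l < (sqrt 6 / 2 - 1) * L"
  obtains p q where "dist p (s1 + L *\<^sub>R ea) + dist p (s2 + L *\<^sub>R ec) + dist p q
    + dist q (s1 + L *\<^sub>R eb) + dist q (s2 + L *\<^sub>R ed) < 4 * L + l"
proof -
  have "u \<bullet> ea = - 1 / 2"
    using balanced(1) unit by (intro inner_eq_neg_half_if_unit_sum_eq_0[of u ea eb]) (simp_all add: algebra_simps)
  moreover have "u \<bullet> - ec = - 1 / 2"
    using balanced(2) unit by (intro inner_eq_neg_half_if_unit_sum_eq_0[of u "- ec" "- ed"]) (simp_all add: algebra_simps)
  ultimately have angles: "u \<bullet> ea = - 1 / 2" "u \<bullet> ec = 1 / 2"
    by simp_all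
  have eb: "eb = - u - ea" and ed: "ed = u - ec"
    using balanced by (simp_all add: algebra_simps eq_neg_iff_add_eq_0)
  define w where "w = ea + ec"
  define r where "r = norm w"
  have "r \<le> 2"
    using norm_triangle_ineq[of ea ec] unit unfolding r_def w_def by simp
  have "L + l < sqrt 6 / 2 * L"
    using short by (simp add: algebra_simps)
  also have "\<dots> \<le> r * L"
    using sqrt6_div2_le_norm_add[OF unit(2,4) \<open>- 1 / 4 \<le> ea \<bullet> ec\<close>] \<open>0 < L\<close>
    unfolding r_def w_def by (intro mult_right_mono) simp_all
  finally obtain t where "0 < t" and RHS: "0 < 4 * L + l - 2 * t * r"
    and Q: "16 * (l\<^sup>2 / 4 + l * L / 2 + L\<^sup>2 + r\<^sup>2 * t * (t - L)) < (4 * L + l - 2 * t * r)\<^sup>2"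
    using swap_parameter_exists[OF \<open>0 < l\<close> \<open>0 < L\<close> \<open>r \<le> 2\<close>] by blast
  have leg: "4 * norm v < 4 * L + l - 2 * t * r"
    if "(norm v)\<^sup>2 = l\<^sup>2 / 4 + l * L / 2 + L\<^sup>2 + r\<^sup>2 * t * (t - L)" for v :: 'a
  proof (rule power2_less_imp_less)
    show "(4 * norm v)\<^sup>2 < (4 * L + l - 2 * t * r)\<^sup>2"
      using Q unfolding power_mult_distrib that by simp
  qed (use RHS in simp)
  note legs = swap_leg_lengths[OF unit(1,2,4) angles, where l = l and L = L and t = t, folded w_def r_def]
  define m where "m = s1 + (l / 2) *\<^sub>R u"
  define p where "p = m + t *\<^sub>R w"
  define q where "q = m - t *\<^sub>R w"
  have half: "(l / 2) *\<^sub>R u + (l / 2) *\<^sub>R u = l *\<^sub>R u"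
    by (simp flip: scaleR_add_left)
  have legs_vec: "p - (s1 + L *\<^sub>R ea) = (l / 2) *\<^sub>R u + (t - L) *\<^sub>R ea + t *\<^sub>R ec"
    "p - (s2 + L *\<^sub>R ec) = (- l / 2) *\<^sub>R u + t *\<^sub>R ea + (t - L) *\<^sub>R ec"
    "q - (s1 + L *\<^sub>R eb) = (l / 2 + L) *\<^sub>R u + (L - t) *\<^sub>R ea + (- t) *\<^sub>R ec"
    "q - (s2 + L *\<^sub>R ed) = (- l / 2 - L) *\<^sub>R u + (- t) *\<^sub>R ea + (L - t) *\<^sub>R ec"
    unfolding p_def q_def m_def w_def s2 eb ed by (simp_all add: algebra_simps half)
  have "4 * dist p (s1 + L *\<^sub>R ea) < 4 * L + l - 2 * t * r"
    unfolding dist_norm legs_vec(1) by (rule leg, rule legs)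
  moreover have "4 * dist p (s2 + L *\<^sub>R ec) < 4 * L + l - 2 * t * r"
    unfolding dist_norm legs_vec(2) by (rule leg, rule legs)
  moreover have "4 * dist q (s1 + L *\<^sub>R eb) < 4 * L + l - 2 * t * r"
    unfolding dist_norm legs_vec(3) by (rule leg, rule legs)
  moreover have "4 * dist q (s2 + L *\<^sub>R ed) < 4 * L + l - 2 * t * r"
    unfolding dist_norm legs_vec(4) by (rule leg, rule legs)
  moreover have "p - q = 2 *\<^sub>R (t *\<^sub>R w)"
    unfolding p_def q_def scaleR_2 by simp
  then have "dist p q = 2 * t * r"
    using \<open>0 < t\<close> unfolding r_def by (simp add: dist_norm)
  ultimately show thesis
    by (intro that[of p q]) linarith
qed

section \<open>Steiner points of an optimal tree\<close>

lemma steiner_point_minimizes_dist_sum: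
  fixes P V :: "'a::euclidean_space set"
  assumes opt: "optimal_steiner_tree P V E" and s: "s \<in> V - P"
  shows "(\<Sum>n\<in>nbrs E s. dist s n) \<le> (\<Sum>n\<in>nbrs E s. dist x n)"
proof (rule continuous_le_off_finite[where S = V and g = "\<lambda>x. \<Sum>n\<in>nbrs E s. dist x n"])
  show "finite V"
    using optimal_steiner_treeD[OF opt] by simp
  show "(\<Sum>n\<in>nbrs E s. dist s n) \<le> (\<Sum>n\<in>nbrs E s. dist y n)" if "y \<notin> V" for y
    using optimal_steiner_tree_relocate[OF opt s that] .
qed (intro continuous_intros)+

lemma steiner_point_balanced:
  fixes P V :: "'a::euclidean_space set"
  assumes opt: "optimal_steiner_tree P V E" and s: "s \<in> V - P"
  shows "(\<Sum>n\<in>nbrs E s. sgn (s - n)) = 0"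
proof (rule sum_sgn_eq_0_if_minimizes_dist_sum)
  show "s \<notin> nbrs E s"
    using nbrs_subset[of V E s] optimal_steiner_treeD[OF opt] by auto
qed (rule steiner_point_minimizes_dist_sum[OF opt s])

lemma optimal_steiner_tree_angle_ge_120:
  fixes P V :: "'a::euclidean_space set"
  assumes opt: "optimal_steiner_tree P V E"
    and a: "a \<in> nbrs E s" and c: "c \<in> nbrs E s" and "a \<noteq> c"
  shows "sgn (s - a) \<bullet> sgn (s - c) \<le> - 1 / 2"
proof (rule inner_sgn_le_if_no_shortcut)
  have "simple_edges V E" "finite V"
    using optimal_steiner_treeD[OF opt] by auto
  then show "s \<noteq> a" "s \<noteq> c"
    using a c nbrs_subset[of V E s] by auto
  show "dist s a + dist s c \<le> dist p a + dist p c + dist p s" for p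
    by (rule continuous_le_off_finite[where S = V and g = "\<lambda>p. dist p a + dist p c + dist p s"])
      (use \<open>finite V\<close> optimal_steiner_tree_split[OF opt a c \<open>a \<noteq> c\<close>] in
        \<open>auto intro!: continuous_intros\<close>)
qed

lemma steiner_point_degree:
  fixes P V :: "'a::euclidean_space set"
  assumes opt: "optimal_steiner_tree P V E" and s: "s \<in> V - P" and "nbrs E s \<noteq> {}"
  shows "card (nbrs E s) = 3"
proof -
  let ?N = "nbrs E s"
  have "simple_edges V E" "finite V"
    using optimal_steiner_treeD[OF opt] by auto
  then have N: "?N \<subseteq> V - {s}" and "finite ?N"
    using nbrs_subset[of V E s] finite_nbrs[of V E s] by simp_all
  have balanced: "(\<Sum>n\<in>?N. sgn (s - n)) = 0"
    using steiner_point_balanced[OF opt s] .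
  have "card ?N \<le> 3"
    using \<open>finite ?N\<close> N optimal_steiner_tree_angle_ge_120[OF opt]
    by (intro card_le_3_if_pairwise_obtuse[where g = "\<lambda>n. sgn (s - n)"]) (auto simp: norm_sgn)
  moreover have "card ?N \<noteq> 0"
    using \<open>finite ?N\<close> assms(3) by simp
  moreover have "card ?N \<noteq> 1"
  proof
    assume "card ?N = 1"
    then obtain a where "?N = {a}"
      by (auto simp: card_Suc_eq)
    with N balanced show False
      by (simp add: sgn_zero_iff)
  qed
  moreover have "card ?N \<noteq> 2"
  proof
    assume "card ?N = 2"
    then obtain a b where ab: "?N = {a, b}" "a \<noteq> b"
      by (auto simp: card_2_iff)
    then have "s \<noteq> a" "s \<noteq> b"
      using N by auto
    moreover have "sgn (s - a) + sgn (s - b) = 0"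
      using balanced ab by simp
    ultimately have "s \<in> open_segment a b"
      by (rule in_open_segment_if_sgn_add_eq_0)
    then have "trivial_steiner_point P V E s"
      unfolding trivial_steiner_point_def using s ab by blast
    with opt show False
      unfolding optimal_steiner_tree_def by blast
  qed
  ultimately show ?thesis
    by linarith
qed

lemma steiner_point_balanced3:
  fixes P V :: "'a::euclidean_space set"
  assumes opt: "optimal_steiner_tree P V E" and s: "s \<in> V - P"
    and N: "nbrs E s = {x, y, z}" and "distinct [x, y, z]"
  shows "sgn (x - s) + sgn (y - s) + sgn (z - s) = 0"
proof -
  have "sgn (x - s) + sgn (y - s) + sgn (z - s) = - (sgn (s - x) + sgn (s - y) + sgn (s - z))"
    by (simp add: sgn_diff_commute[of _ s])
  also have "sgn (s - x) + sgn (s - y) + sgn (s - z) = 0"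
    using steiner_point_balanced[OF opt s] \<open>distinct [x, y, z]\<close> unfolding N by (simp add: add.assoc)
  finally show ?thesis
    by simp
qed

lemma adjacent_steiner_points_nbrs:
  fixes P V :: "'a::euclidean_space set"
  assumes opt: "optimal_steiner_tree P V E" and s1: "s1 \<in> V - P" and s2: "s2 \<in> V - P"
    and "{s1, s2} \<in> E"
  obtains a b c d where "nbrs E s1 = {s2, a, b}" "nbrs E s2 = {s1, c, d}"
    "distinct [s1, s2, a, b, c, d]"
proof -
  have tree: "is_tree V E" and simple: "simple_edges V E" and "finite V"
    using opt optimal_steiner_treeD[OF opt]
    unfolding optimal_steiner_tree_def steiner_tree_def by auto
  have "s2 \<in> nbrs E s1" "s1 \<in> nbrs E s2"
    using \<open>{s1, s2} \<in> E\<close> by (simp_all add: nbrs_def insert_commute)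
  then have "card (nbrs E s1) = 3" "card (nbrs E s2) = 3"
    using steiner_point_degree[OF opt s1] steiner_point_degree[OF opt s2] by auto
  moreover have "finite (nbrs E s1)" "finite (nbrs E s2)"
    using finite_nbrs[OF \<open>finite V\<close> simple] by auto
  ultimately have "card (nbrs E s1 - {s2}) = 2" "card (nbrs E s2 - {s1}) = 2"
    using \<open>s2 \<in> nbrs E s1\<close> \<open>s1 \<in> nbrs E s2\<close> by simp_all
  then obtain a b c d where ab: "nbrs E s1 - {s2} = {a, b}" "a \<noteq> b"
    and cd: "nbrs E s2 - {s1} = {c, d}" "c \<noteq> d"
    by (auto simp: card_2_iff)
  have N1: "nbrs E s1 = {s2, a, b}" and N2: "nbrs E s2 = {s1, c, d}"
    using ab cd \<open>s2 \<in> nbrs E s1\<close> \<open>s1 \<in> nbrs E s2\<close> by auto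
  have cross: "x \<noteq> y" if "x \<in> {a, b}" "y \<in> {c, d}" for x y
  proof
    assume "x = y"
    with that N1 N2 have "{s1, x} \<in> E" "{s2, x} \<in> E"
      by (auto simp: nbrs_def)
    with \<open>{s1, s2} \<in> E\<close> show False
      by (rule tree_no_triangle[OF tree])
  qed
  have "a \<noteq> c" "a \<noteq> d" "b \<noteq> c" "b \<noteq> d"
    by (rule cross; simp)+
  moreover have "a \<noteq> s1" "b \<noteq> s1" "c \<noteq> s2" "d \<noteq> s2"
    using nbrs_subset[OF simple, of s1] nbrs_subset[OF simple, of s2] N1 N2 by auto
  moreover have "a \<noteq> s2" "b \<noteq> s2" "c \<noteq> s1" "d \<noteq> s1"
    using ab cd by auto
  moreover have "s1 \<noteq> s2"
    using simple_edgesD[OF simple \<open>{s1, s2} \<in> E\<close>] by simp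
  ultimately have "distinct [s1, s2, a, b, c, d]"
    using ab(2) cd(2) by auto
  with N1 N2 that show thesis
    by blast
qed

lemma optimal_steiner_tree_swap_everywhere:
  fixes P V :: "'a::euclidean_space set"
  assumes opt: "optimal_steiner_tree P V E" and "s1 \<notin> P" "s2 \<notin> P"
    and N1: "nbrs E s1 = {s2, a, b}" and N2: "nbrs E s2 = {s1, c, d}"
    and distinct: "distinct [s1, s2, a, b, c, d]"
  shows "dist s1 a + dist s1 b + dist s1 s2 + dist s2 c + dist s2 d
    \<le> dist p a + dist p c + dist p q + dist q b + dist q d"
proof -
  let ?cost = "\<lambda>p q. dist p a + dist p c + dist p q + dist q b + dist q d"
  have "finite V"
    using optimal_steiner_treeD[OF opt] by simp
  have off_V: "dist s1 a + dist s1 b + dist s1 s2 + dist s2 c + dist s2 d \<le> ?cost p' q"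
    if "p' \<notin> V" for p' q
  proof (rule continuous_le_off_finite[where S = "insert p' V" and g = "?cost p'"])
    show "dist s1 a + dist s1 b + dist s1 s2 + dist s2 c + dist s2 d \<le> ?cost p' q'"
      if "q' \<notin> insert p' V" for q'
      using optimal_steiner_tree_swap[OF assms \<open>p' \<notin> V\<close>] that by auto
  qed (use \<open>finite V\<close> in \<open>auto intro!: continuous_intros\<close>)
  show ?thesis
    by (rule continuous_le_off_finite[where S = V and g = "\<lambda>p. ?cost p q"])
      (use \<open>finite V\<close> off_V in \<open>auto intro!: continuous_intros\<close>)
qed

lemma adjacent_steiner_points_balanced:
  fixes P V :: "'a::euclidean_space set"
  assumes opt: "optimal_steiner_tree P V E" and s1: "s1 \<in> V - P" and s2: "s2 \<in> V - P"
    and N1: "nbrs E s1 = {s2, a, b}" and N2: "nbrs E s2 = {s1, c, d}"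
    and distinct: "distinct [s1, s2, a, b, c, d]"
  shows "sgn (a - s1) + sgn (b - s1) + sgn (s2 - s1) = 0"
    and "sgn (c - s2) + sgn (d - s2) = sgn (s2 - s1)"
proof -
  have "sgn (s2 - s1) + sgn (a - s1) + sgn (b - s1) = 0"
    using distinct by (intro steiner_point_balanced3[OF opt s1 N1]) auto
  then show "sgn (a - s1) + sgn (b - s1) + sgn (s2 - s1) = 0"
    by (simp add: algebra_simps)
  have "sgn (s1 - s2) + sgn (c - s2) + sgn (d - s2) = 0"
    using distinct by (intro steiner_point_balanced3[OF opt s2 N2]) auto
  then show "sgn (c - s2) + sgn (d - s2) = sgn (s2 - s1)"
    by (simp add: sgn_diff_commute[of s1] algebra_simps)
qed

lemma adjacent_steiner_points_dist_ge_pairing: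
  fixes P V :: "'a::euclidean_space set"
  assumes opt: "optimal_steiner_tree P V E" and s1: "s1 \<in> V - P" and s2: "s2 \<in> V - P"
    and N1: "nbrs E s1 = {s2, a, b}" and N2: "nbrs E s2 = {s1, c, d}"
    and distinct: "distinct [s1, s2, a, b, c, d]"
    and L: "0 < L" "L \<le> dist s1 a" "L \<le> dist s1 b" "L \<le> dist s2 c" "L \<le> dist s2 d"
    and "- 1 / 4 \<le> sgn (a - s1) \<bullet> sgn (c - s2)"
  shows "(sqrt 6 / 2 - 1) * L \<le> dist s1 s2"
proof (rule ccontr)
  assume "\<not> ?thesis"
  then have short: "dist s1 s2 < (sqrt 6 / 2 - 1) * L"
    by simp
  have unit: "norm (sgn (s2 - s1)) = 1" "norm (sgn (a - s1)) = 1" "norm (sgn (b - s1)) = 1"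
    "norm (sgn (c - s2)) = 1" "norm (sgn (d - s2)) = 1"
    using distinct by (auto simp: norm_sgn)
  have s2_eq: "s2 = s1 + dist s1 s2 *\<^sub>R sgn (s2 - s1)"
    using scaleR_norm_sgn[of "s2 - s1"] by (simp add: dist_norm norm_minus_commute)
  have "0 < dist s1 s2"
    using distinct by simp
  obtain p q where cheap: "dist p (s1 + L *\<^sub>R sgn (a - s1)) + dist p (s2 + L *\<^sub>R sgn (c - s2))
      + dist p q + dist q (s1 + L *\<^sub>R sgn (b - s1)) + dist q (s2 + L *\<^sub>R sgn (d - s2))
      < 4 * L + dist s1 s2"
    by (rule swap_beats_short_edge[OF unit adjacent_steiner_points_balanced[OF assms(1-6)]
        \<open>- 1 / 4 \<le> sgn (a - s1) \<bullet> sgn (c - s2)\<close> s2_eq \<open>0 < dist s1 s2\<close> \<open>0 < L\<close> short])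
  have tail: "dist p x \<le> dist p (s + L *\<^sub>R sgn (x - s)) + (dist s x - L)" if "L \<le> dist s x" for p s x :: 'a
    using dist_triangle[of p x "s + L *\<^sub>R sgn (x - s)"] dist_shift_toward[OF less_imp_le[OF \<open>0 < L\<close>] that]
    by simp
  show False
    using optimal_steiner_tree_swap_everywhere[OF opt _ _ N1 N2 distinct, of p q] s1 s2 cheap
      tail[OF L(2), of p] tail[OF L(3), of q] tail[OF L(4), of p] tail[OF L(5), of q]
    by auto
qed

lemma adjacent_steiner_points_dist_ge:
  fixes P V :: "'a::euclidean_space set"
  assumes opt: "optimal_steiner_tree P V E" and s1: "s1 \<in> V - P" and s2: "s2 \<in> V - P"
    and N1: "nbrs E s1 = {s2, a, b}" and N2: "nbrs E s2 = {s1, c, d}"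
    and distinct: "distinct [s1, s2, a, b, c, d]"
    and L: "0 < L" "L \<le> dist s1 a" "L \<le> dist s1 b" "L \<le> dist s2 c" "L \<le> dist s2 d"
  shows "(sqrt 6 / 2 - 1) * L \<le> dist s1 s2"
proof -
  note balanced = adjacent_steiner_points_balanced[OF opt s1 s2 N1 N2 distinct]
  have "sgn (a - s1) \<bullet> sgn (c - s2) + sgn (a - s1) \<bullet> sgn (d - s2) = sgn (a - s1) \<bullet> sgn (s2 - s1)"
    using balanced(2) by (metis inner_add_right)
  also have "\<dots> = - 1 / 2"
    using balanced(1) distinct
    by (intro inner_eq_neg_half_if_unit_sum_eq_0[where z = "sgn (b - s1)"]) (auto simp: norm_sgn algebra_simps)
  finally consider "- 1 / 4 \<le> sgn (a - s1) \<bullet> sgn (c - s2)" | "- 1 / 4 \<le> sgn (a - s1) \<bullet> sgn (d - s2)"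
    by linarith
  then show ?thesis
  proof cases
    case 1
    then show ?thesis
      by (rule adjacent_steiner_points_dist_ge_pairing[OF opt s1 s2 N1 N2 distinct L])
  next
    case 2
    have "nbrs E s2 = {s1, d, c}" "distinct [s1, s2, a, b, d, c]"
      using N2 distinct by (auto simp: insert_commute)
    with 2 show ?thesis
      using adjacent_steiner_points_dist_ge_pairing[OF opt s1 s2 N1 _ _ L(1-3) L(5,4)] by blast
  qed
qed

lemma dists_to_other_nbrs:
  assumes "nbrs E s1 = {s2, a, b}" "nbrs E s2 = {s1, c, d}" "distinct [s1, s2, a, b, c, d]"
  shows "{dist s v | s v. s \<in> {s1, s2} \<and> v \<in> nbrs E s - {s1, s2}}
    = {dist s1 a, dist s1 b, dist s2 c, dist s2 d}"
proof -
  have "{dist s v | s v. s \<in> {s1, s2} \<and> v \<in> nbrs E s - {s1, s2}}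
      = dist s1 ` (nbrs E s1 - {s1, s2}) \<union> dist s2 ` (nbrs E s2 - {s1, s2})"
    by blast
  also have "\<dots> = {dist s1 a, dist s1 b, dist s2 c, dist s2 d}"
  proof -
    have "nbrs E s1 - {s1, s2} = {a, b}" "nbrs E s2 - {s1, s2} = {c, d}"
      using assms by auto
    then show ?thesis
      by (simp add: insert_commute)
  qed
  finally show ?thesis .
qed

theorem mainTheorem1:
  fixes P V :: "'a::euclidean_space set" and E :: "'a set set" and s1 s2 :: 'a
  assumes "DIM('a) \<ge> 3"
    and "optimal_steiner_tree P V E"
    and "s1 \<in> V - P" and "s2 \<in> V - P"
    and "{s1, s2} \<in> E"
  shows "dist s1 s2 \<ge> (sqrt 6 / 2 - 1) *
           Min {dist s v | s v. s \<in> {s1, s2} \<and> v \<in> nbrs E s - {s1, s2}}"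
proof -
  obtain a b c d where N1: "nbrs E s1 = {s2, a, b}" and N2: "nbrs E s2 = {s1, c, d}"
    and distinct: "distinct [s1, s2, a, b, c, d]"
    using adjacent_steiner_points_nbrs[OF assms(2-5)] by blast
  define L where "L = Min {dist s1 a, dist s1 b, dist s2 c, dist s2 d}"
  have "0 < L" "L \<le> dist s1 a" "L \<le> dist s1 b" "L \<le> dist s2 c" "L \<le> dist s2 d"
    using distinct by (simp_all add: L_def)
  then have "(sqrt 6 / 2 - 1) * L \<le> dist s1 s2"
    by (rule adjacent_steiner_points_dist_ge[OF assms(2-4) N1 N2 distinct])
  then show ?thesis
    unfolding dists_to_other_nbrs[OF N1 N2 distinct] L_def .
qed

end
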